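(* Let $m>0$ and $a_1,a_2\in(-\infty,4m^2)$. Define on $I=(-\infty,4m^2)$ the function $A(\gamma):=(a_1-\gamma)(a_2-\gamma)J(\gamma)$. Then $A$ is convex on $I$ (indeed $A''(\gamma)=\int_{4m^2}^\infty\rho(M)\frac{2(M-a_1)(M-a_2)}{(M-\gamma)^3}dM>0$), $A'$ is monotonically increasing, $\lim_{\gamma\to-\infty}A'(\gamma)=-\infty$, $\lim_{\gamma\to4m^2}A'(\gamma)=+\infty$, and hence $A'(I)=\mathbb{R}$.
   Context: $\rho(M)=\frac{1}{16\pi^2}\sqrt{1-\frac{4m^2}{M}}\frac1M$ for $M\ge4m^2$, and $J(\gamma)=\int_{4m^2}^\infty\frac{\rho(M)}{M-\gamma}dM$ for $\gamma<4m^2$. *)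

theory Defs
  imports "HOL-Analysis.Analysis"
begin

definition rho :: "real \<Rightarrow> real \<Rightarrow> real" where
  "rho m M = 1 / (16 * pi\<^sup>2) * sqrt (1 - 4 * m\<^sup>2 / M) * (1 / M)"

definition J :: "real \<Rightarrow> real \<Rightarrow> real" where
  "J m \<gamma> = (LINT M:{4 * m\<^sup>2..}|lborel. rho m M / (M - \<gamma>))"

definition A :: "real \<Rightarrow> real \<Rightarrow> real \<Rightarrow> real \<Rightarrow> real" where
  "A m a1 a2 \<gamma> = (a1 - \<gamma>) * (a2 - \<gamma>) * J m \<gamma>"

end

theory Submission
  imports Defs "HOL-Real_Asymp.Real_Asymp"
begin

(*
  Write J_n(g) for the integral of rho(M) / (M - g)^n over M >= 4 m^2, so that J = J_1 and
  A(g) = (a1 - g)(a2 - g) J_1(g). Differentiating under the integral sign gives J_n' = n J_(n+1);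
  this is justified by the elementary bound
    |(D - h)^-n - D^-n - n h D^-(n+1)| <= C h^2 / D      (D >= delta > 2|h|)
  integrated against rho, since rho(M)/(M - g) is integrable. Hence
    A'' = 2 J_1 + 2 (2g - a1 - a2) J_2 + 2 (a1 - g)(a2 - g) J_3
        = integral of rho(M) * 2 (M - a1)(M - a2) / (M - g)^3,
  which is positive because M >= 4 m^2 > a1, a2; so A is convex and A' is increasing.

  For the limits of A' = (2g - a1 - a2) J_1 + (a1 - g)(a2 - g) J_2: the bound
  J_2(g) <= J_1(g) / (4 m^2 - g) gives A'(g) <= -(a1 - g) J_1(g) for g < a1, a2, and since rho(M)
  decays only like 1/M, J_1(g) grows like log|g| / |g|, so A' tends to -infinity at -infinity.
  At the threshold rho(M) vanishes like sqrt(M - 4 m^2), which makes J_2(4 m^2 - delta) grow like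
  delta^(-1/2), so A' tends to +infinity. The intermediate value theorem then gives A'(I) = R.
*)

section \<open>Real analysis\<close>

lemma DERIV_of_quadratic_remainder_bound:
  fixes F :: "real \<Rightarrow> real"
  assumes "r > 0" and "\<And>h. h \<noteq> 0 \<Longrightarrow> \<bar>h\<bar> < r \<Longrightarrow> \<bar>F (x + h) - F x - h * L\<bar> \<le> B * h\<^sup>2"
  shows "(F has_real_derivative L) (at x)"
proof -
  have quotient_bound: "norm ((F (x + h) - F x) / h - L) \<le> \<bar>B\<bar> * \<bar>h\<bar>"
    if h: "h \<noteq> 0" "\<bar>h\<bar> < r" for h
  proof -
    have "norm ((F (x + h) - F x) / h - L) = \<bar>F (x + h) - F x - h * L\<bar> / \<bar>h\<bar>"
      using h by (simp add: field_simps abs_divide)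
    also have "\<dots> \<le> B * h\<^sup>2 / \<bar>h\<bar>"
      using assms(2)[OF h] by (simp add: divide_right_mono)
    also have "\<dots> = B * \<bar>h\<bar>"
      using h by (simp add: power2_eq_square abs_mult_self_eq[symmetric, of h] del: abs_mult_self_eq)
    also have "\<dots> \<le> \<bar>B\<bar> * \<bar>h\<bar>"
      by (simp add: mult_right_mono)
    finally show ?thesis .
  qed
  have "\<forall>\<^sub>F h in at 0. norm ((F (x + h) - F x) / h - L) \<le> \<bar>B\<bar> * \<bar>h\<bar>"
    using assms(1) quotient_bound by (auto simp: eventually_at dist_real_def)
  then have "((\<lambda>h. (F (x + h) - F x) / h - L) \<longlongrightarrow> 0) (at 0)"
    by (rule Lim_null_comparison) (auto intro!: tendsto_eq_intros)
  then show ?thesis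
    unfolding DERIV_def by (simp add: LIM_zero_iff)
qed

lemma Taylor_quadratic_remainder_bound:
  fixes f f' f'' :: "real \<Rightarrow> real"
  assumes f': "\<And>t. t \<in> closed_segment x (x + h) \<Longrightarrow> (f has_real_derivative f' t) (at t)"
    and f'': "\<And>t. t \<in> closed_segment x (x + h) \<Longrightarrow> (f' has_real_derivative f'' t) (at t)"
    and bound: "\<And>t. t \<in> closed_segment x (x + h) \<Longrightarrow> \<bar>f'' t\<bar> \<le> B"
  shows "\<bar>f (x + h) - f x - h * f' x\<bar> \<le> B / 2 * h\<^sup>2"
proof (cases "h = 0")
  case False
  define diff where "diff k = (if k = 0 then f else if k = 1 then f' else f'')" for k :: nat
  have segment: "t \<in> closed_segment x (x + h)" if "min x (x + h) \<le> t" "t \<le> max x (x + h)" for t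
    using that by (auto simp: closed_segment_eq_real_ivl)
  have "\<forall>(k::nat) t. k < 2 \<and> min x (x + h) \<le> t \<and> t \<le> max x (x + h) \<longrightarrow>
      (diff k has_real_derivative diff (Suc k) t) (at t)"
  proof (intro allI impI, elim conjE)
    fix k :: nat and t assume "k < 2" "min x (x + h) \<le> t" "t \<le> max x (x + h)"
    then show "(diff k has_real_derivative diff (Suc k) t) (at t)"
      using f' f'' segment by (cases "k = 0") (auto simp: diff_def)
  qed
  then have "\<exists>t. (if x + h < x then x + h < t \<and> t < x else x < t \<and> t < x + h) \<and>
      f (x + h) = (\<Sum>k<2. diff k x / fact k * (x + h - x) ^ k) + diff 2 t / fact 2 * (x + h - x) ^ 2"
    by (intro Taylor) (use False in \<open>auto simp: diff_def\<close>)
  then obtain t where between: "if x + h < x then x + h < t \<and> t < x else x < t \<and> t < x + h"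
    and expansion: "f (x + h) = (\<Sum>k<2. diff k x / fact k * (x + h - x) ^ k) + diff 2 t / fact 2 * (x + h - x) ^ 2"
    by blast
  have t: "t \<in> closed_segment x (x + h)"
    using between segment by (auto split: if_splits)
  have eq: "f (x + h) = f x + h * f' x + f'' t / 2 * h\<^sup>2"
    using expansion by (simp add: diff_def eval_nat_numeral algebra_simps)
  have "\<bar>f'' t / 2 * h\<^sup>2\<bar> \<le> B / 2 * h\<^sup>2"
    using bound[OF t] by (simp add: abs_mult mult_right_mono)
  then show ?thesis
    using eq by simp
qed simp

lemma DERIV_inverse_power_shift:
  fixes D t :: real
  assumes "t \<noteq> D"
  shows "((\<lambda>t. 1 / (D - t) ^ k) has_real_derivative k / (D - t) ^ Suc k) (at t)"
proof (induction k)
  case (Suc k)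
  have inverse: "((\<lambda>t. 1 / (D - t)) has_real_derivative 1 / (D - t) ^ 2) (at t)"
    using assms by (auto intro!: derivative_eq_intros simp: power2_eq_square)
  have "((\<lambda>t. 1 / (D - t) * (1 / (D - t) ^ k)) has_real_derivative
      1 / (D - t) ^ 2 * (1 / (D - t) ^ k) + k / (D - t) ^ Suc k * (1 / (D - t))) (at t)"
    by (rule DERIV_mult[OF inverse Suc.IH])
  moreover have "1 / u ^ 2 * (1 / u ^ k) + k / u ^ Suc k * (1 / u) = Suc k / u ^ Suc (Suc k)"
    if "u \<noteq> 0" for u :: real
    using that by (simp add: field_simps power2_eq_square)
  ultimately show ?case
    using assms by simp
qed simp

lemma one_over_power_le_of_half:
  fixes D E \<delta> :: real
  assumes "0 < \<delta>" "\<delta> \<le> D" "D / 2 \<le> E"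
  shows "1 / E ^ (k + 2) \<le> 2 ^ (k + 2) / (\<delta> ^ (k + 1) * D)"
proof -
  have "\<delta> ^ (k + 1) * D / 2 ^ (k + 2) \<le> D ^ (k + 1) * D / 2 ^ (k + 2)"
    using assms by (intro divide_right_mono mult_right_mono power_mono) auto
  also have "\<dots> = (D / 2) ^ (k + 2)"
    by (simp add: power_divide)
  also have "\<dots> \<le> E ^ (k + 2)"
    using assms by (intro power_mono) auto
  finally have "1 / E ^ (k + 2) \<le> 1 / (\<delta> ^ (k + 1) * D / 2 ^ (k + 2))"
    using assms by (intro divide_left_mono mult_pos_pos) auto
  then show ?thesis
    by simp
qed

lemma inverse_power_remainder_bound:
  fixes D h \<delta> :: real
  assumes "0 < \<delta>" "\<delta> \<le> D" "\<bar>h\<bar> < \<delta> / 2"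
  shows "\<bar>1 / (D - h) ^ k - 1 / D ^ k - h * (k / D ^ Suc k)\<bar> \<le> k * (k + 1) * 2 ^ (k + 1) / \<delta> ^ (k + 1) * h\<^sup>2 / D"
proof -
  define B where "B = k * (k + 1) * 2 ^ (k + 2) / (\<delta> ^ (k + 1) * D)"
  have half: "D / 2 \<le> D - t" if "t \<in> closed_segment 0 h" for t
    using that assms by (auto simp: closed_segment_eq_real_ivl split: if_splits)
  have "\<bar>1 / (D - (0 + h)) ^ k - 1 / (D - 0) ^ k - h * (k * (1 / (D - 0) ^ Suc k))\<bar> \<le> B / 2 * h\<^sup>2"
  proof (rule Taylor_quadratic_remainder_bound[where f = "\<lambda>t. 1 / (D - t) ^ k"
        and f' = "\<lambda>t. k * (1 / (D - t) ^ Suc k)" and f'' = "\<lambda>t. k * (Suc k / (D - t) ^ Suc (Suc k))"])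
    fix t assume "t \<in> closed_segment 0 (0 + h)"
    then have t: "t \<in> closed_segment 0 h"
      by simp
    then have "t \<noteq> D"
      using half[OF t] assms by auto
    show "((\<lambda>t. 1 / (D - t) ^ k) has_real_derivative k * (1 / (D - t) ^ Suc k)) (at t)"
      using DERIV_inverse_power_shift[OF \<open>t \<noteq> D\<close>] by simp
    show "((\<lambda>t. k * (1 / (D - t) ^ Suc k)) has_real_derivative k * (Suc k / (D - t) ^ Suc (Suc k))) (at t)"
      by (intro DERIV_cmult DERIV_inverse_power_shift \<open>t \<noteq> D\<close>)
    have "1 / (D - t) ^ Suc (Suc k) \<le> 2 ^ (k + 2) / (\<delta> ^ (k + 1) * D)"
      using one_over_power_le_of_half[OF assms(1,2) half[OF t]] by simp
    then have "k * (k + 1) * (1 / (D - t) ^ Suc (Suc k)) \<le> k * (k + 1) * (2 ^ (k + 2) / (\<delta> ^ (k + 1) * D))"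
      by (rule mult_left_mono) simp
    then have "k * (k + 1) * (1 / (D - t) ^ Suc (Suc k)) \<le> B"
      by (simp add: B_def)
    moreover have "\<bar>k * (Suc k / (D - t) ^ Suc (Suc k))\<bar> = k * (k + 1) * (1 / (D - t) ^ Suc (Suc k))"
      using half[OF t] assms by (simp add: abs_of_nonneg distrib_left del: power_Suc)
    ultimately show "\<bar>k * (Suc k / (D - t) ^ Suc (Suc k))\<bar> \<le> B"
      by simp
  qed
  then show ?thesis
    using assms by (simp add: B_def field_simps power_add)
qed

lemma mono_on_of_DERIV_nonneg:
  fixes g :: "real \<Rightarrow> real"
  assumes "convex S" and "\<And>x. x \<in> S \<Longrightarrow> (g has_real_derivative g' x) (at x)"
    and "\<And>x. x \<in> S \<Longrightarrow> 0 \<le> g' x"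
  shows "mono_on S g"
proof (rule mono_onI)
  fix x y assume xy: "x \<in> S" "y \<in> S" "x \<le> y"
  then have "closed_segment x y \<subseteq> S"
    using assms(1) by (simp add: convex_contains_segment)
  then have "{x..y} \<subseteq> S"
    using xy(3) by (simp add: closed_segment_eq_real_ivl)
  show "g x \<le> g y"
  proof (rule DERIV_nonneg_imp_nondecreasing[OF xy(3)])
    fix t assume "x \<le> t" "t \<le> y"
    then have "t \<in> S"
      using \<open>{x..y} \<subseteq> S\<close> by auto
    then show "\<exists>d. (g has_real_derivative d) (at t) \<and> 0 \<le> d"
      using assms(2,3) by blast
  qed
qed

lemma image_lessThan_eq_UNIV_of_filterlim:
  fixes g :: "real \<Rightarrow> real"
  assumes cont: "continuous_on {..<s} g"
    and bot: "filterlim g at_bot at_bot" and top: "filterlim g at_top (at_left s)"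
  shows "g ` {..<s} = UNIV"
proof (intro set_eqI iffI)
  fix y :: real
  have "\<forall>\<^sub>F x in at_bot. g x \<le> y"
    using bot by (simp add: filterlim_at_bot)
  then have "\<forall>\<^sub>F x in at_bot. g x \<le> y \<and> x \<le> s - 1"
    using eventually_le_at_bot by (rule eventually_conj)
  then obtain x1 where x1: "g x1 \<le> y" "x1 < s"
    using eventually_happens'[OF trivial_limit_at_bot_linorder] by force
  have "\<forall>\<^sub>F x in at_left s. y \<le> g x"
    using top by (simp add: filterlim_at_top)
  then have "\<forall>\<^sub>F x in at_left s. y \<le> g x \<and> x \<in> {x1<..<s}"
    using eventually_at_left_real[OF x1(2)] by (rule eventually_conj)
  then obtain x2 where x2: "y \<le> g x2" "x1 < x2" "x2 < s"
    using eventually_happens'[OF trivial_limit_at_left_real] by auto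
  have "continuous_on {x1..x2} g"
    by (rule continuous_on_subset[OF cont]) (use x2 in auto)
  then obtain x where "x1 \<le> x" "x \<le> x2" "g x = y"
    using IVT'[of g x1 y x2] x1 x2 by auto
  then show "y \<in> g ` {..<s}"
    using x2 by force
qed simp

section \<open>Set integrals on the real line\<close>

lemma abs_set_integral_le:
  fixes f g :: "'a::euclidean_space \<Rightarrow> real"
  assumes "set_integrable M S f" "set_integrable M S g" "\<And>x. x \<in> S \<Longrightarrow> \<bar>f x\<bar> \<le> g x"
  shows "\<bar>LINT x:S|M. f x\<bar> \<le> (LINT x:S|M. g x)"
  using assms unfolding set_integrable_def set_lebesgue_integral_def
  by (intro integral_abs_bound_integral) (auto simp: indicator_def)

lemma set_integral_le_superset:
  fixes f g :: "'a \<Rightarrow> real"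
  assumes "set_integrable M S f" "set_integrable M T g" "T \<subseteq> S"
    and "\<And>x. x \<in> S \<Longrightarrow> 0 \<le> f x" "\<And>x. x \<in> T \<Longrightarrow> g x \<le> f x"
  shows "(LINT x:T|M. g x) \<le> (LINT x:S|M. f x)"
  using assms unfolding set_integrable_def set_lebesgue_integral_def
  by (intro integral_mono) (auto simp: indicator_def)

lemma set_integral_const_atLeastAtMost:
  fixes p q c :: real
  assumes "p \<le> q"
  shows "set_integrable lborel {p..q} (\<lambda>_. c)" "(LINT x:{p..q}|lborel. c) = c * (q - p)"
  using assms by (auto intro: borel_integrable_atLeastAtMost' simp: set_integral_const)

lemma set_integral_inverse_atLeastAtMost:
  fixes p q :: real
  assumes "0 < p" "p \<le> q"
  shows "set_integrable lborel {p..q} (\<lambda>x. 1 / x)" "(LINT x:{p..q}|lborel. 1 / x) = ln q - ln p"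
proof -
  have cont: "continuous_on {p..q} (\<lambda>x. 1 / x)"
    using assms by (intro continuous_intros) auto
  then show "set_integrable lborel {p..q} (\<lambda>x. 1 / x)"
    by (rule borel_integrable_atLeastAtMost')
  have "(LBINT x=p..q. 1 / x) = ln q - ln p"
  proof (rule interval_integral_FTC_finite)
    show "continuous_on {min p q..max p q} (\<lambda>x. 1 / x)"
      using cont assms by simp
    fix x assume "min p q \<le> x" "x \<le> max p q"
    then have "0 < x"
      using assms by simp
    then show "(ln has_vector_derivative 1 / x) (at x within {min p q..max p q})"
      by (auto intro!: derivative_eq_intros simp flip: has_real_derivative_iff_has_vector_derivative)
  qed
  then show "(LINT x:{p..q}|lborel. 1 / x) = ln q - ln p"
    using interval_integral_Icc[OF assms(2), of "\<lambda>x. 1 / x"] by simp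
qed

lemma set_integrable_inverse_square_shift:
  fixes s \<gamma> :: real
  assumes "\<gamma> < s"
  shows "set_integrable lborel {s..} (\<lambda>x. 1 / (x - \<gamma>)\<^sup>2)"
proof -
  define a where "a = (s + \<gamma>) / 2"
  have "set_integrable lborel (einterval a \<infinity>) (\<lambda>x. 1 / (x - \<gamma>)\<^sup>2)"
  proof (rule interval_integral_FTC_nonneg(1)[where F = "\<lambda>x. - 1 / (x - \<gamma>)" and A = "- 1 / (a - \<gamma>)" and B = 0])
    fix x assume "ereal a < ereal x"
    then have "x > \<gamma>"
      using assms by (simp add: a_def)
    then show "DERIV (\<lambda>x. - 1 / (x - \<gamma>)) x :> 1 / (x - \<gamma>)\<^sup>2"
      by (auto intro!: derivative_eq_intros simp: power2_eq_square)
    show "isCont (\<lambda>x. 1 / (x - \<gamma>)\<^sup>2) x"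
      using \<open>x > \<gamma>\<close> by (intro continuous_intros) auto
  next
    have "a > \<gamma>"
      using assms by (simp add: a_def)
    then show "(((\<lambda>x. - 1 / (x - \<gamma>)) \<circ> real_of_ereal) \<longlongrightarrow> - 1 / (a - \<gamma>)) (at_right (ereal a))"
      unfolding ereal_tendsto_simps by (auto intro!: tendsto_eq_intros)
    show "(((\<lambda>x. - 1 / (x - \<gamma>)) \<circ> real_of_ereal) \<longlongrightarrow> 0) (at_left \<infinity>)"
      unfolding ereal_tendsto_simps by real_asymp
  qed auto
  then show ?thesis
    by (rule set_integrable_subset) (use assms in \<open>auto simp: a_def\<close>)
qed

section \<open>The spectral density\<close>

lemma rho_measurable [measurable]: "rho m \<in> borel_measurable borel"
  unfolding rho_def by measurable

lemma rho_sqrt_bounds: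
  assumes "4 * m\<^sup>2 \<le> M"
  shows "0 \<le> sqrt (1 - 4 * m\<^sup>2 / M)" "sqrt (1 - 4 * m\<^sup>2 / M) \<le> 1" "0 \<le> M"
proof -
  have "0 \<le> 4 * m\<^sup>2"
    by simp
  then show "0 \<le> M"
    using assms by linarith
  then have "4 * m\<^sup>2 / M \<le> 1"
    using assms by (cases "M = 0") (simp_all add: divide_le_eq_1)
  then show "0 \<le> sqrt (1 - 4 * m\<^sup>2 / M)" "sqrt (1 - 4 * m\<^sup>2 / M) \<le> 1"
    using \<open>0 \<le> M\<close> by simp_all
qed

lemma rho_nonneg: "4 * m\<^sup>2 \<le> M \<Longrightarrow> 0 \<le> rho m M"
  using rho_sqrt_bounds[of m M] unfolding rho_def by simp

lemma rho_le: "4 * m\<^sup>2 \<le> M \<Longrightarrow> rho m M \<le> 1 / (16 * pi\<^sup>2) / M"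
  using rho_sqrt_bounds[of m M] unfolding rho_def
  by (simp add: divide_right_mono mult_le_cancel_right1)

lemma rho_ge:
  assumes "0 < p" "4 * m\<^sup>2 \<le> p" "p \<le> M"
  shows "1 / (16 * pi\<^sup>2) * sqrt (1 - 4 * m\<^sup>2 / p) / M \<le> rho m M"
proof -
  have "4 * m\<^sup>2 / M \<le> 4 * m\<^sup>2 / p"
    using assms by (intro divide_left_mono) auto
  then show ?thesis
    using assms unfolding rho_def by (simp add: divide_right_mono)
qed

section \<open>The moments of the spectral density\<close>

text \<open>For \<open>n = 0\<close> the integrand \<open>rho m M\<close> decays only like \<open>1 / M\<close> and is not integrable,
  so \<open>Jn m 0\<close> is a junk value; only \<open>n \<ge> 1\<close> is meaningful.\<close>
definition Jn :: "real \<Rightarrow> nat \<Rightarrow> real \<Rightarrow> real" where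
  "Jn m n \<gamma> = (LINT M:{4 * m\<^sup>2..}|lborel. rho m M / (M - \<gamma>) ^ n)"

lemma J_eq_Jn: "J m = Jn m 1"
  by (simp add: fun_eq_iff J_def Jn_def)

lemma rho_div_power_le:
  assumes m: "m > 0" and \<gamma>: "\<gamma> < 4 * m\<^sup>2" and M: "4 * m\<^sup>2 \<le> M"
  shows "rho m M / (M - \<gamma>) ^ Suc n
    \<le> 1 / (16 * pi\<^sup>2) * (1 + \<bar>\<gamma>\<bar> / (4 * m\<^sup>2)) / (4 * m\<^sup>2 - \<gamma>) ^ n * (1 / (M - \<gamma>)\<^sup>2)"
proof -
  define s where "s = 4 * m\<^sup>2"
  define c where "c = 1 / (16 * pi\<^sup>2)"
  define K where "K = 1 + \<bar>\<gamma>\<bar> / s"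
  have s: "0 < s" "\<gamma> < s" "s \<le> M"
    using m \<gamma> M by (simp_all add: s_def)
  then have M_pos: "0 < M" and D: "s - \<gamma> \<le> M - \<gamma>" "0 < M - \<gamma>" and K_pos: "0 < K"
    by (auto simp: K_def add_pos_nonneg)
  have "\<bar>\<gamma>\<bar> * 1 \<le> \<bar>\<gamma>\<bar> * (M / s)"
    using s by (intro mult_left_mono) auto
  then have "M - \<gamma> \<le> K * M"
    using s by (simp add: K_def algebra_simps)
  then have "K / (K * M) \<le> K / (M - \<gamma>)"
    using M_pos D K_pos by (intro divide_left_mono) auto
  then have "c * (1 / M) \<le> c * (K / (M - \<gamma>))"
    using K_pos by (intro mult_left_mono) (simp_all add: c_def)
  then have rho: "rho m M \<le> c * K / (M - \<gamma>)"
    using rho_le[of m M] M by (simp add: c_def)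
  have "(s - \<gamma>) ^ n \<le> (M - \<gamma>) ^ n"
    using D s by (intro power_mono) auto
  then have "rho m M / (M - \<gamma>) ^ Suc n \<le> c * K / (M - \<gamma>) / ((s - \<gamma>) ^ n * (M - \<gamma>))"
    using rho s D rho_nonneg[OF M] by (intro frac_le mult_mono) (auto simp: mult.commute)
  also have "\<dots> = c * K / (s - \<gamma>) ^ n * (1 / (M - \<gamma>)\<^sup>2)"
    by (simp add: power2_eq_square)
  finally show ?thesis
    by (simp add: s_def c_def K_def)
qed

lemma set_integrable_rho_inverse_power:
  assumes m: "m > 0" and \<gamma>: "\<gamma> < 4 * m\<^sup>2"
  shows "set_integrable lborel {4 * m\<^sup>2..} (\<lambda>M. rho m M / (M - \<gamma>) ^ Suc n)"
proof (rule set_integrable_bound)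
  define C where "C = 1 / (16 * pi\<^sup>2) * (1 + \<bar>\<gamma>\<bar> / (4 * m\<^sup>2)) / (4 * m\<^sup>2 - \<gamma>) ^ n"
  show "set_integrable lborel {4 * m\<^sup>2..} (\<lambda>M. C * (1 / (M - \<gamma>)\<^sup>2))"
    using set_integrable_inverse_square_shift[OF \<gamma>] by (rule set_integrable_mult_right)
  show "set_borel_measurable lborel {4 * m\<^sup>2..} (\<lambda>M. rho m M / (M - \<gamma>) ^ Suc n)"
    unfolding set_borel_measurable_def by measurable
  have "0 \<le> C"
    using \<gamma> by (simp add: C_def)
  then show "AE M in lborel. M \<in> {4 * m\<^sup>2..} \<longrightarrow>
      norm (rho m M / (M - \<gamma>) ^ Suc n) \<le> norm (C * (1 / (M - \<gamma>)\<^sup>2))"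
    using rho_div_power_le[OF m \<gamma>] rho_nonneg \<gamma> by (auto simp: C_def)
qed

lemma Jn_nonneg:
  assumes "\<gamma> < 4 * m\<^sup>2"
  shows "0 \<le> Jn m n \<gamma>"
  unfolding Jn_def set_lebesgue_integral_def
  using assms by (intro Bochner_Integration.integral_nonneg) (auto simp: indicator_def intro!: divide_nonneg_pos rho_nonneg)

lemma set_integral_le_Jn:
  assumes m: "m > 0" and \<gamma>: "\<gamma> < 4 * m\<^sup>2" and T: "T \<subseteq> {4 * m\<^sup>2..}"
    and g: "set_integrable lborel T g" and le: "\<And>M. M \<in> T \<Longrightarrow> g M \<le> rho m M / (M - \<gamma>) ^ Suc n"
  shows "(LINT M:T|lborel. g M) \<le> Jn m (Suc n) \<gamma>"
  unfolding Jn_def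
  by (rule set_integral_le_superset[OF set_integrable_rho_inverse_power[OF m \<gamma>] g T _ le])
    (use \<gamma> rho_nonneg in auto)

lemma Jn_pos:
  assumes m: "m > 0" and \<gamma>: "\<gamma> < 4 * m\<^sup>2"
  shows "0 < Jn m (Suc n) \<gamma>"
proof -
  define s where "s = 4 * m\<^sup>2"
  define \<kappa> where "\<kappa> = 1 / (16 * pi\<^sup>2) * sqrt (1 / 2) / (3 * s) * (1 / (3 * s - \<gamma>) ^ Suc n)"
  have s: "s > 0" "\<gamma> < s"
    using m \<gamma> by (simp_all add: s_def)
  have "(LINT M:{2 * s..3 * s}|lborel. \<kappa>) \<le> Jn m (Suc n) \<gamma>"
  proof (rule set_integral_le_Jn[OF m \<gamma>])
    show "{2 * s..3 * s} \<subseteq> {4 * m\<^sup>2..}"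
      using s by (auto simp: s_def)
    show "set_integrable lborel {2 * s..3 * s} (\<lambda>_. \<kappa>)"
      using s by (intro set_integral_const_atLeastAtMost) simp
  next
    fix M assume M: "M \<in> {2 * s..3 * s}"
    have "1 / (16 * pi\<^sup>2) * sqrt (1 / 2) / (3 * s) \<le> 1 / (16 * pi\<^sup>2) * sqrt (1 / 2) / M"
      using M s by (intro divide_left_mono mult_pos_pos) auto
    also have "\<dots> = 1 / (16 * pi\<^sup>2) * sqrt (1 - s / (2 * s)) / M"
      using s by simp
    also have "\<dots> \<le> rho m M"
      using rho_ge[of "2 * s" m M] M s by (simp add: s_def)
    finally have "1 / (16 * pi\<^sup>2) * sqrt (1 / 2) / (3 * s) \<le> rho m M" .
    moreover have "1 / (3 * s - \<gamma>) ^ Suc n \<le> 1 / (M - \<gamma>) ^ Suc n"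
      using M s by (intro divide_left_mono power_mono mult_pos_pos) auto
    ultimately have "\<kappa> \<le> rho m M * (1 / (M - \<gamma>) ^ Suc n)"
      unfolding \<kappa>_def by (rule mult_mono) (use rho_nonneg[of m M] M s in \<open>auto simp: s_def\<close>)
    then show "\<kappa> \<le> rho m M / (M - \<gamma>) ^ Suc n"
      by simp
  qed
  moreover have "(LINT M:{2 * s..3 * s}|lborel. \<kappa>) = \<kappa> * s"
    using s by (simp add: set_integral_const_atLeastAtMost)
  moreover have "0 < \<kappa> * s"
    using s by (simp add: \<kappa>_def)
  ultimately show ?thesis
    by simp
qed

lemma Jn_Suc_le:
  assumes m: "m > 0" and \<gamma>: "\<gamma> < 4 * m\<^sup>2"
  shows "Jn m (Suc (Suc n)) \<gamma> \<le> Jn m (Suc n) \<gamma> / (4 * m\<^sup>2 - \<gamma>)"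
proof -
  have "Jn m (Suc (Suc n)) \<gamma> \<le> (LINT M:{4 * m\<^sup>2..}|lborel. 1 / (4 * m\<^sup>2 - \<gamma>) * (rho m M / (M - \<gamma>) ^ Suc n))"
    unfolding Jn_def
  proof (rule set_integral_mono)
    show "set_integrable lborel {4 * m\<^sup>2..} (\<lambda>M. rho m M / (M - \<gamma>) ^ Suc (Suc n))"
      by (rule set_integrable_rho_inverse_power[OF m \<gamma>])
    show "set_integrable lborel {4 * m\<^sup>2..} (\<lambda>M. 1 / (4 * m\<^sup>2 - \<gamma>) * (rho m M / (M - \<gamma>) ^ Suc n))"
      by (rule set_integrable_mult_right[OF set_integrable_rho_inverse_power[OF m \<gamma>]])
  next
    fix M assume "M \<in> {4 * m\<^sup>2..}"
    then have "4 * m\<^sup>2 - \<gamma> \<le> M - \<gamma>" "0 < 4 * m\<^sup>2 - \<gamma>" "0 \<le> rho m M"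
      using \<gamma> rho_nonneg[of m M] by auto
    then show "rho m M / (M - \<gamma>) ^ Suc (Suc n) \<le> 1 / (4 * m\<^sup>2 - \<gamma>) * (rho m M / (M - \<gamma>) ^ Suc n)"
      by (simp add: frac_le mult_mono)
  qed
  then show ?thesis
    unfolding set_integral_mult_right by (simp add: Jn_def)
qed

lemma Jn_difference_eq_set_integral:
  fixes h :: real
  assumes m: "m > 0" and \<gamma>: "\<gamma> < 4 * m\<^sup>2" "\<gamma> + h < 4 * m\<^sup>2"
  shows "Jn m (Suc n) (\<gamma> + h) - Jn m (Suc n) \<gamma> - h * (Suc n * Jn m (Suc (Suc n)) \<gamma>)
    = (LINT M:{4 * m\<^sup>2..}|lborel. rho m M / (M - (\<gamma> + h)) ^ Suc n - rho m M / (M - \<gamma>) ^ Suc n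
        - (h * Suc n) * (rho m M / (M - \<gamma>) ^ Suc (Suc n)))"
proof -
  have i1: "set_integrable lborel {4 * m\<^sup>2..} (\<lambda>M. rho m M / (M - (\<gamma> + h)) ^ Suc n)"
    and i2: "set_integrable lborel {4 * m\<^sup>2..} (\<lambda>M. rho m M / (M - \<gamma>) ^ Suc n)"
    and i3: "set_integrable lborel {4 * m\<^sup>2..} (\<lambda>M. rho m M / (M - \<gamma>) ^ Suc (Suc n))"
    using \<gamma> by (blast intro: set_integrable_rho_inverse_power[OF m])+
  show ?thesis
    unfolding set_integral_diff(2)[OF set_integral_diff(1)[OF i1 i2] set_integrable_mult_right[OF i3]]
      set_integral_diff(2)[OF i1 i2] set_integral_mult_right
    by (simp add: Jn_def)
qed

lemma Jn_quadratic_remainder_bound: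
  fixes n :: nat
  assumes m: "m > 0" and \<gamma>: "\<gamma> < 4 * m\<^sup>2" and h: "\<bar>h\<bar> < (4 * m\<^sup>2 - \<gamma>) / 2"
  defines "C \<equiv> real (Suc n) * (real (Suc n) + 1) * 2 ^ (Suc n + 1) / (4 * m\<^sup>2 - \<gamma>) ^ (Suc n + 1)"
  shows "\<bar>Jn m (Suc n) (\<gamma> + h) - Jn m (Suc n) \<gamma> - h * (Suc n * Jn m (Suc (Suc n)) \<gamma>)\<bar> \<le> C * Jn m 1 \<gamma> * h\<^sup>2"
proof -
  define e where "e M = rho m M / (M - (\<gamma> + h)) ^ Suc n - rho m M / (M - \<gamma>) ^ Suc n
    - (h * Suc n) * (rho m M / (M - \<gamma>) ^ Suc (Suc n))" for M
  have \<delta>: "0 < 4 * m\<^sup>2 - \<gamma>" and \<gamma>h: "\<gamma> + h < 4 * m\<^sup>2"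
    using \<gamma> h by auto
  have int: "set_integrable lborel {4 * m\<^sup>2..} (\<lambda>M. rho m M / (M - x) ^ Suc j)" if "x < 4 * m\<^sup>2" for x j
    using set_integrable_rho_inverse_power[OF m that] .
  have "\<bar>Jn m (Suc n) (\<gamma> + h) - Jn m (Suc n) \<gamma> - h * (Suc n * Jn m (Suc (Suc n)) \<gamma>)\<bar>
      = \<bar>LINT M:{4 * m\<^sup>2..}|lborel. e M\<bar>"
    unfolding e_def Jn_difference_eq_set_integral[OF m \<gamma> \<gamma>h] ..
  also have "\<dots> \<le> (LINT M:{4 * m\<^sup>2..}|lborel. (C * h\<^sup>2) * (rho m M / (M - \<gamma>) ^ Suc 0))"
  proof (rule abs_set_integral_le)
    show "set_integrable lborel {4 * m\<^sup>2..} e"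
      unfolding e_def using \<gamma> \<gamma>h by (intro set_integral_diff(1) set_integrable_mult_right int)
    show "set_integrable lborel {4 * m\<^sup>2..} (\<lambda>M. (C * h\<^sup>2) * (rho m M / (M - \<gamma>) ^ Suc 0))"
      using int[OF \<gamma>] by (rule set_integrable_mult_right)
  next
    fix M assume "M \<in> {4 * m\<^sup>2..}"
    then have D: "4 * m\<^sup>2 - \<gamma> \<le> M - \<gamma>" and \<rho>: "0 \<le> rho m M"
      using rho_nonneg[of m M] by auto
    define R where "R = 1 / (M - \<gamma> - h) ^ Suc n - 1 / (M - \<gamma>) ^ Suc n - h * (Suc n / (M - \<gamma>) ^ Suc (Suc n))"
    have "\<bar>R\<bar> \<le> C * h\<^sup>2 / (M - \<gamma>)"
      unfolding R_def C_def by (rule inverse_power_remainder_bound[OF \<delta> D h])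
    moreover have "e M = rho m M * R"
      by (simp add: e_def R_def algebra_simps)
    ultimately have "\<bar>e M\<bar> \<le> rho m M * (C * h\<^sup>2 / (M - \<gamma>))"
      using \<rho> by (simp add: abs_mult mult_left_mono del: times_divide_eq_right)
    then show "\<bar>e M\<bar> \<le> (C * h\<^sup>2) * (rho m M / (M - \<gamma>) ^ Suc 0)"
      by (simp add: mult.commute)
  qed
  also have "\<dots> = C * Jn m 1 \<gamma> * h\<^sup>2"
    unfolding set_integral_mult_right by (simp add: Jn_def)
  finally show ?thesis .
qed

lemma has_real_derivative_Jn:
  assumes m: "m > 0" and \<gamma>: "\<gamma> < 4 * m\<^sup>2"
  shows "(Jn m (Suc n) has_real_derivative Suc n * Jn m (Suc (Suc n)) \<gamma>) (at \<gamma>)"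
proof (rule DERIV_of_quadratic_remainder_bound)
  show "0 < (4 * m\<^sup>2 - \<gamma>) / 2"
    using \<gamma> by simp
  fix h :: real assume "\<bar>h\<bar> < (4 * m\<^sup>2 - \<gamma>) / 2"
  then show "\<bar>Jn m (Suc n) (\<gamma> + h) - Jn m (Suc n) \<gamma> - h * (Suc n * Jn m (Suc (Suc n)) \<gamma>)\<bar>
      \<le> (real (Suc n) * (real (Suc n) + 1) * 2 ^ (Suc n + 1) / (4 * m\<^sup>2 - \<gamma>) ^ (Suc n + 1) * Jn m 1 \<gamma>) * h\<^sup>2"
    by (rule Jn_quadratic_remainder_bound[OF m \<gamma>])
qed

lemma Jn_1_ge_log:
  assumes m: "m > 0" and \<gamma>: "2 * (4 * m\<^sup>2) \<le> - \<gamma>"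
  shows "1 / (16 * pi\<^sup>2) * sqrt (1 / 2) / (2 * - \<gamma>) * (ln (- \<gamma>) - ln (2 * (4 * m\<^sup>2))) \<le> Jn m 1 \<gamma>"
proof -
  define s where "s = 4 * m\<^sup>2"
  define u where "u = - \<gamma>"
  define \<kappa> where "\<kappa> = 1 / (16 * pi\<^sup>2) * sqrt (1 / 2) / (2 * u)"
  have "0 < s"
    using m by (simp add: s_def)
  moreover have "2 * s \<le> u"
    using \<gamma> by (simp add: s_def u_def)
  ultimately have s: "0 < s" "2 * s \<le> u" "\<gamma> < s"
    by (auto simp: u_def)
  have "(LINT M:{2 * s..u}|lborel. \<kappa> * (1 / M)) \<le> Jn m (Suc 0) \<gamma>"
  proof (rule set_integral_le_Jn[OF m])
    show "\<gamma> < 4 * m\<^sup>2" "{2 * s..u} \<subseteq> {4 * m\<^sup>2..}"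
      using s by (auto simp: s_def)
    show "set_integrable lborel {2 * s..u} (\<lambda>M. \<kappa> * (1 / M))"
      using s by (intro set_integrable_mult_right set_integral_inverse_atLeastAtMost) auto
  next
    fix M assume M: "M \<in> {2 * s..u}"
    have "1 / (16 * pi\<^sup>2) * sqrt (1 / 2) / M = 1 / (16 * pi\<^sup>2) * sqrt (1 - s / (2 * s)) / M"
      using s by simp
    also have "\<dots> \<le> rho m M"
      using rho_ge[of "2 * s" m M] M s by (simp add: s_def)
    finally have "1 / (16 * pi\<^sup>2) * sqrt (1 / 2) * (1 / M) \<le> rho m M"
      by simp
    moreover have "1 / (2 * u) \<le> 1 / (M - \<gamma>)"
      using M s by (intro divide_left_mono mult_pos_pos) (auto simp: u_def)
    ultimately have "1 / (16 * pi\<^sup>2) * sqrt (1 / 2) * (1 / M) * (1 / (2 * u)) \<le> rho m M * (1 / (M - \<gamma>))"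
      using M s rho_nonneg[of m M] by (intro mult_mono) (auto simp: s_def[symmetric])
    then show "\<kappa> * (1 / M) \<le> rho m M / (M - \<gamma>) ^ Suc 0"
      by (simp add: \<kappa>_def ac_simps)
  qed
  moreover have "(LINT M:{2 * s..u}|lborel. \<kappa> * (1 / M)) = \<kappa> * (ln u - ln (2 * s))"
    unfolding set_integral_mult_right using s by (simp add: set_integral_inverse_atLeastAtMost)
  ultimately show ?thesis
    by (simp add: s_def u_def \<kappa>_def)
qed

lemma Jn_2_ge_threshold:
  assumes m: "m > 0" and \<delta>: "0 < \<delta>" "\<delta> \<le> 4 * m\<^sup>2"
  shows "1 / (16 * pi\<^sup>2) / (27 * (4 * m\<^sup>2) * sqrt (2 * (4 * m\<^sup>2))) / sqrt \<delta> \<le> Jn m 2 (4 * m\<^sup>2 - \<delta>)"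
proof -
  define s where "s = 4 * m\<^sup>2"
  define \<gamma> where "\<gamma> = s - \<delta>"
  define \<kappa> where "\<kappa> = 1 / (16 * pi\<^sup>2) * sqrt (\<delta> / (2 * s)) / (3 * s) * (1 / (3 * \<delta>)\<^sup>2)"
  have s: "0 < s" "\<delta> \<le> s" "\<gamma> < s"
    using m \<delta> by (auto simp: s_def \<gamma>_def)
  have "(LINT M:{s + \<delta>..s + 2 * \<delta>}|lborel. \<kappa>) \<le> Jn m (Suc 1) \<gamma>"
  proof (rule set_integral_le_Jn[OF m])
    show "\<gamma> < 4 * m\<^sup>2" "{s + \<delta>..s + 2 * \<delta>} \<subseteq> {4 * m\<^sup>2..}"
      using s \<delta> by (auto simp: s_def)
    show "set_integrable lborel {s + \<delta>..s + 2 * \<delta>} (\<lambda>_. \<kappa>)"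
      using \<delta> by (intro set_integral_const_atLeastAtMost) simp
  next
    fix M assume M: "M \<in> {s + \<delta>..s + 2 * \<delta>}"
    have "\<delta> / (2 * s) \<le> 1 - s / (s + \<delta>)"
      using s \<delta> by (simp add: field_simps)
    then have "1 / (16 * pi\<^sup>2) * sqrt (\<delta> / (2 * s)) / (3 * s) \<le> 1 / (16 * pi\<^sup>2) * sqrt (1 - s / (s + \<delta>)) / M"
      using M s \<delta> by (intro frac_le mult_left_mono) auto
    also have "\<dots> \<le> rho m M"
      using rho_ge[of "s + \<delta>" m M] M s \<delta> by (simp add: s_def)
    finally have "1 / (16 * pi\<^sup>2) * sqrt (\<delta> / (2 * s)) / (3 * s) \<le> rho m M" .
    moreover have "1 / (3 * \<delta>)\<^sup>2 \<le> 1 / (M - \<gamma>)\<^sup>2"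
      using M \<delta> by (intro divide_left_mono power_mono mult_pos_pos) (auto simp: \<gamma>_def)
    ultimately have "\<kappa> \<le> rho m M * (1 / (M - \<gamma>)\<^sup>2)"
      unfolding \<kappa>_def by (rule mult_mono) (use rho_nonneg[of m M] M s in \<open>auto simp: s_def\<close>)
    then show "\<kappa> \<le> rho m M / (M - \<gamma>) ^ Suc 1"
      by (simp add: power2_eq_square)
  qed
  moreover have "(LINT M:{s + \<delta>..s + 2 * \<delta>}|lborel. \<kappa>) = 1 / (16 * pi\<^sup>2) / (27 * s * sqrt (2 * s)) / sqrt \<delta>"
  proof -
    have "sqrt \<delta> * sqrt \<delta> = \<delta>"
      using \<delta> by simp
    then show ?thesis
      using \<delta> s by (simp add: set_integral_const_atLeastAtMost \<kappa>_def real_sqrt_divide field_simps power2_eq_square)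
  qed
  ultimately show ?thesis
    by (simp add: s_def \<gamma>_def numeral_2_eq_2)
qed

section \<open>The function A and its first two derivatives\<close>

definition A' :: "real \<Rightarrow> real \<Rightarrow> real \<Rightarrow> real \<Rightarrow> real" where
  "A' m a1 a2 \<gamma> = (2 * \<gamma> - a1 - a2) * Jn m 1 \<gamma> + (a1 - \<gamma>) * (a2 - \<gamma>) * Jn m 2 \<gamma>"

definition A'' :: "real \<Rightarrow> real \<Rightarrow> real \<Rightarrow> real \<Rightarrow> real" where
  "A'' m a1 a2 \<gamma> = (LINT M:{4 * m\<^sup>2..}|lborel. rho m M * (2 * (M - a1) * (M - a2) / (M - \<gamma>) ^ 3))"

lemma has_real_derivative_A:
  assumes "m > 0" "\<gamma> < 4 * m\<^sup>2"
  shows "(A m a1 a2 has_real_derivative A' m a1 a2 \<gamma>) (at \<gamma>)"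
proof -
  have "A m a1 a2 = (\<lambda>\<gamma>. (a1 - \<gamma>) * (a2 - \<gamma>) * Jn m (Suc 0) \<gamma>)"
    by (simp add: fun_eq_iff A_def J_eq_Jn)
  then show ?thesis
    using has_real_derivative_Jn[OF assms, of 0]
    by (auto intro!: derivative_eq_intros simp: A'_def algebra_simps numeral_2_eq_2)
qed

lemma A''_eq_Jn:
  assumes m: "m > 0" and \<gamma>: "\<gamma> < 4 * m\<^sup>2"
  shows "set_integrable lborel {4 * m\<^sup>2..} (\<lambda>M. rho m M * (2 * (M - a1) * (M - a2) / (M - \<gamma>) ^ 3))"
    and "A'' m a1 a2 \<gamma> = 2 * Jn m 1 \<gamma> + 2 * (2 * \<gamma> - a1 - a2) * Jn m 2 \<gamma> + 2 * ((a1 - \<gamma>) * (a2 - \<gamma>)) * Jn m 3 \<gamma>"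
proof -
  define S where "S = {4 * m\<^sup>2..}"
  define f where "f k M = rho m M / (M - \<gamma>) ^ Suc k" for k M
  define c1 c2 where "c1 = 2 * (2 * \<gamma> - a1 - a2)" and "c2 = 2 * ((a1 - \<gamma>) * (a2 - \<gamma>))"
  have int: "set_integrable lborel S (f k)" for k
    unfolding S_def f_def by (rule set_integrable_rho_inverse_power[OF m \<gamma>])
  have int_sum: "set_integrable lborel S (\<lambda>M. 2 * f 0 M + c1 * f 1 M + c2 * f 2 M)"
    by (intro set_integral_add(1) set_integrable_mult_right int)
  have integrand: "rho m M * (2 * (M - a1) * (M - a2) / (M - \<gamma>) ^ 3) = 2 * f 0 M + c1 * f 1 M + c2 * f 2 M"
    if "M \<in> S" for M
  proof -
    have "M - \<gamma> \<noteq> 0"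
      using that \<gamma> by (auto simp: S_def)
    then show ?thesis
      unfolding f_def c1_def c2_def
      by (simp add: divide_simps power3_eq_cube power2_eq_square) (simp add: algebra_simps)
  qed
  show "set_integrable lborel {4 * m\<^sup>2..} (\<lambda>M. rho m M * (2 * (M - a1) * (M - a2) / (M - \<gamma>) ^ 3))"
    using int_sum integrand unfolding S_def by (subst set_integrable_cong) auto
  have "A'' m a1 a2 \<gamma> = (LINT M:S|lborel. 2 * f 0 M + c1 * f 1 M + c2 * f 2 M)"
    unfolding A''_def S_def[symmetric] using integrand
    by (intro set_lebesgue_integral_cong) (auto simp: S_def)
  also have "\<dots> = 2 * (LINT M:S|lborel. f 0 M) + c1 * (LINT M:S|lborel. f 1 M) + c2 * (LINT M:S|lborel. f 2 M)"
    using int by (simp add: set_integral_add set_integrable_mult_right set_integral_mult_right)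
  finally show "A'' m a1 a2 \<gamma> = 2 * Jn m 1 \<gamma> + 2 * (2 * \<gamma> - a1 - a2) * Jn m 2 \<gamma> + 2 * ((a1 - \<gamma>) * (a2 - \<gamma>)) * Jn m 3 \<gamma>"
    by (simp add: Jn_def S_def f_def c1_def c2_def numeral_2_eq_2 numeral_3_eq_3)
qed

lemma has_real_derivative_A':
  assumes "m > 0" "\<gamma> < 4 * m\<^sup>2"
  shows "(A' m a1 a2 has_real_derivative A'' m a1 a2 \<gamma>) (at \<gamma>)"
proof -
  have "(A' m a1 a2 has_real_derivative
      2 * Jn m 1 \<gamma> + 2 * (2 * \<gamma> - a1 - a2) * Jn m 2 \<gamma> + 2 * ((a1 - \<gamma>) * (a2 - \<gamma>)) * Jn m 3 \<gamma>) (at \<gamma>)"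
    unfolding A'_def[abs_def]
    using has_real_derivative_Jn[OF assms, of 0] has_real_derivative_Jn[OF assms, of 1]
    by (auto intro!: derivative_eq_intros simp: algebra_simps numeral_2_eq_2 numeral_3_eq_3)
  then show ?thesis
    using A''_eq_Jn(2)[OF assms] by simp
qed

lemma A''_pos:
  assumes m: "m > 0" and \<gamma>: "\<gamma> < 4 * m\<^sup>2" and a: "a1 < 4 * m\<^sup>2" "a2 < 4 * m\<^sup>2"
  shows "0 < A'' m a1 a2 \<gamma>"
proof -
  define s where "s = 4 * m\<^sup>2"
  define p where "p = 2 * (s - a1) * (s - a2)"
  have p: "0 < p"
    using a by (simp add: p_def s_def)
  have "(LINT M:{s..}|lborel. p * (rho m M / (M - \<gamma>) ^ 3)) \<le> A'' m a1 a2 \<gamma>"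
    unfolding A''_def s_def
  proof (rule set_integral_mono)
    show "set_integrable lborel {4 * m\<^sup>2..} (\<lambda>M. p * (rho m M / (M - \<gamma>) ^ 3))"
      using set_integrable_rho_inverse_power[OF m \<gamma>, of 2]
      by (intro set_integrable_mult_right) (simp add: numeral_3_eq_3)
    show "set_integrable lborel {4 * m\<^sup>2..} (\<lambda>M. rho m M * (2 * (M - a1) * (M - a2) / (M - \<gamma>) ^ 3))"
      by (rule A''_eq_Jn(1)[OF m \<gamma>])
  next
    fix M assume "M \<in> {4 * m\<^sup>2..}"
    then have M: "s \<le> M" and "0 \<le> rho m M" "0 < M - \<gamma>"
      using \<gamma> rho_nonneg[of m M] by (auto simp: s_def)
    moreover have "p \<le> 2 * (M - a1) * (M - a2)"
      unfolding p_def using M a by (intro mult_mono) (auto simp: s_def)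
    ultimately have "rho m M * p / (M - \<gamma>) ^ 3 \<le> rho m M * (2 * (M - a1) * (M - a2)) / (M - \<gamma>) ^ 3"
      by (intro divide_right_mono mult_left_mono) auto
    then show "p * (rho m M / (M - \<gamma>) ^ 3) \<le> rho m M * (2 * (M - a1) * (M - a2) / (M - \<gamma>) ^ 3)"
      by (simp add: ac_simps)
  qed
  moreover have "0 < (LINT M:{s..}|lborel. p * (rho m M / (M - \<gamma>) ^ 3))"
    using Jn_pos[OF m \<gamma>, of 2] p unfolding set_integral_mult_right
    by (simp add: Jn_def s_def numeral_3_eq_3)
  ultimately show ?thesis
    by linarith
qed

lemma deriv_A_eq:
  assumes "m > 0" "\<gamma> < 4 * m\<^sup>2"
  shows "deriv (A m a1 a2) \<gamma> = A' m a1 a2 \<gamma>"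
  using has_real_derivative_A[OF assms] by (rule DERIV_imp_deriv)

lemma has_real_derivative_deriv_A:
  assumes "m > 0" "\<gamma> < 4 * m\<^sup>2"
  shows "(deriv (A m a1 a2) has_real_derivative A'' m a1 a2 \<gamma>) (at \<gamma>)"
proof (rule has_field_derivative_transform_within_open[OF has_real_derivative_A'[OF assms] open_lessThan])
  show "\<gamma> \<in> {..<4 * m\<^sup>2}"
    using assms(2) by simp
  fix x assume "x \<in> {..<4 * m\<^sup>2}"
  then show "A' m a1 a2 x = deriv (A m a1 a2) x"
    using deriv_A_eq[OF assms(1)] by simp
qed

lemma A'_le:
  assumes m: "m > 0" and a1: "a1 < 4 * m\<^sup>2" and \<gamma>: "\<gamma> < a1" "\<gamma> < a2"
  shows "A' m a1 a2 \<gamma> \<le> - ((a1 - \<gamma>) * Jn m 1 \<gamma>)"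
proof -
  define u v w where "u = a1 - \<gamma>" and "v = a2 - \<gamma>" and "w = 4 * m\<^sup>2 - \<gamma>"
  have uvw: "0 < u" "0 < v" "u \<le> w"
    using a1 \<gamma> by (simp_all add: u_def v_def w_def)
  have J: "0 \<le> Jn m 1 \<gamma>" "Jn m 2 \<gamma> \<le> Jn m 1 \<gamma> / w"
    using Jn_nonneg[of \<gamma> m 1] Jn_Suc_le[OF m, of \<gamma> 0] a1 \<gamma> by (simp_all add: w_def numeral_2_eq_2)
  have "A' m a1 a2 \<gamma> = - (u + v) * Jn m 1 \<gamma> + u * v * Jn m 2 \<gamma>"
    by (simp add: A'_def u_def v_def algebra_simps)
  also have "\<dots> \<le> - (u + v) * Jn m 1 \<gamma> + u * v * (Jn m 1 \<gamma> / w)"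
    by (intro add_left_mono mult_left_mono) (use J uvw in auto)
  also have "\<dots> \<le> - (u + v) * Jn m 1 \<gamma> + v * Jn m 1 \<gamma>"
  proof -
    have "u * v / w \<le> v"
      using uvw by (simp add: divide_le_eq mult_left_mono mult.commute[of u])
    then have "u * v / w * Jn m 1 \<gamma> \<le> v * Jn m 1 \<gamma>"
      using J by (intro mult_right_mono)
    then show ?thesis
      by simp
  qed
  also have "\<dots> = - ((a1 - \<gamma>) * Jn m 1 \<gamma>)"
    by (simp add: u_def algebra_simps)
  finally show ?thesis .
qed

lemma filterlim_A'_at_bot:
  assumes m: "m > 0" and a1: "a1 < 4 * m\<^sup>2"
  shows "filterlim (A' m a1 a2) at_bot at_bot"
proof -
  define s where "s = 4 * m\<^sup>2"
  define k where "k = 1 / (16 * pi\<^sup>2) * sqrt (1 / 2)"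
  define g where "g \<gamma> = (a1 - \<gamma>) * (k / (2 * - \<gamma>) * (ln (- \<gamma>) - ln (2 * s)))" for \<gamma>
  have "k > 0"
    by (simp add: k_def)
  then have "filterlim g at_top at_bot"
    unfolding g_def by real_asymp
  moreover have "\<forall>\<^sub>F \<gamma> in at_bot. g \<gamma> \<le> - A' m a1 a2 \<gamma>"
    using eventually_le_at_bot[of "min (min a1 a2 - 1) (- 2 * s)"]
  proof eventually_elim
    case (elim \<gamma>)
    then have "\<gamma> < a1" "\<gamma> < a2" "2 * (4 * m\<^sup>2) \<le> - \<gamma>"
      by (auto simp: s_def)
    then have "g \<gamma> \<le> (a1 - \<gamma>) * Jn m 1 \<gamma>"
      unfolding g_def k_def s_def using Jn_1_ge_log[OF m] by (intro mult_left_mono) auto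
    also have "\<dots> \<le> - A' m a1 a2 \<gamma>"
      using A'_le[OF m a1 \<open>\<gamma> < a1\<close> \<open>\<gamma> < a2\<close>] by linarith
    finally show ?case .
  qed
  ultimately have "filterlim (\<lambda>\<gamma>. - A' m a1 a2 \<gamma>) at_top at_bot"
    by (rule filterlim_at_top_mono)
  then show ?thesis
    by (simp add: filterlim_uminus_at_bot)
qed

lemma filterlim_A'_at_left_threshold:
  assumes m: "m > 0" and a: "a1 < 4 * m\<^sup>2" "a2 < 4 * m\<^sup>2"
  shows "filterlim (A' m a1 a2) at_top (at_left (4 * m\<^sup>2))"
proof -
  define s where "s = 4 * m\<^sup>2"
  define k where "k = 1 / (16 * pi\<^sup>2) / (27 * s * sqrt (2 * s))"
  have s: "0 < s"
    using m by (simp add: s_def)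
  have "filterlim (\<lambda>\<gamma>. (a1 - \<gamma>) * (a2 - \<gamma>) * (k / sqrt (s - \<gamma>))) at_top (at_left s)"
  proof (rule filterlim_tendsto_pos_mult_at_top)
    show "((\<lambda>\<gamma>. (a1 - \<gamma>) * (a2 - \<gamma>)) \<longlongrightarrow> (a1 - s) * (a2 - s)) (at_left s)"
      by (intro tendsto_intros)
    show "0 < (a1 - s) * (a2 - s)"
      using a by (simp add: s_def mult_neg_neg)
    have "k > 0"
      using s by (simp add: k_def)
    then show "filterlim (\<lambda>\<gamma>. k / sqrt (s - \<gamma>)) at_top (at_left s)"
      by real_asymp
  qed
  moreover have "\<forall>\<^sub>F \<gamma> in at_left s. (a1 - \<gamma>) * (a2 - \<gamma>) * (k / sqrt (s - \<gamma>)) \<le> A' m a1 a2 \<gamma>"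
  proof -
    have "max (max a1 a2) 0 < s"
      using a s by (simp add: s_def)
    from eventually_at_left_real[OF this]
    show ?thesis
    proof (rule eventually_mono)
    fix \<gamma> assume "\<gamma> \<in> {max (max a1 a2) 0<..<s}"
    then have \<gamma>: "a1 < \<gamma>" "a2 < \<gamma>" "0 < s - \<gamma>" "s - \<gamma> \<le> 4 * m\<^sup>2"
      by (auto simp: s_def)
    have "(a1 - \<gamma>) * (a2 - \<gamma>) * (k / sqrt (s - \<gamma>)) \<le> (a1 - \<gamma>) * (a2 - \<gamma>) * Jn m 2 \<gamma>"
      using Jn_2_ge_threshold[OF m \<gamma>(3,4)] \<gamma> by (intro mult_left_mono) (auto simp: k_def s_def intro: mult_nonpos_nonpos)
    also have "\<dots> \<le> A' m a1 a2 \<gamma>"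
      using Jn_nonneg[of \<gamma> m 1] \<gamma> by (simp add: A'_def s_def)
    finally show "(a1 - \<gamma>) * (a2 - \<gamma>) * (k / sqrt (s - \<gamma>)) \<le> A' m a1 a2 \<gamma>" .
    qed
  qed
  ultimately show ?thesis
    unfolding s_def by (rule filterlim_at_top_mono)
qed

lemma filterlim_deriv_A_iff:
  assumes "m > 0" "\<forall>\<^sub>F \<gamma> in F. \<gamma> < 4 * m\<^sup>2"
  shows "filterlim (deriv (A m a1 a2)) G F \<longleftrightarrow> filterlim (A' m a1 a2) G F"
  by (rule filterlim_cong) (use assms in \<open>auto elim!: eventually_mono simp: deriv_A_eq\<close>)

theorem lemma4p10:
  fixes m a1 a2 :: real
  assumes "m > 0"
    and "a1 < 4 * m\<^sup>2" and "a2 < 4 * m\<^sup>2"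
  shows "(\<forall>\<gamma>\<in>{..<4 * m\<^sup>2}. A m a1 a2 differentiable (at \<gamma>))
    \<and> (\<forall>\<gamma>\<in>{..<4 * m\<^sup>2}.
          (deriv (A m a1 a2) has_real_derivative
             (LINT M:{4 * m\<^sup>2..}|lborel. rho m M * (2 * (M - a1) * (M - a2) / (M - \<gamma>) ^ 3))) (at \<gamma>)
        \<and> (LINT M:{4 * m\<^sup>2..}|lborel. rho m M * (2 * (M - a1) * (M - a2) / (M - \<gamma>) ^ 3)) > 0)
    \<and> convex_on {..<4 * m\<^sup>2} (A m a1 a2)
    \<and> mono_on {..<4 * m\<^sup>2} (deriv (A m a1 a2))
    \<and> filterlim (deriv (A m a1 a2)) at_bot at_bot
    \<and> filterlim (deriv (A m a1 a2)) at_top (at_left (4 * m\<^sup>2))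
    \<and> deriv (A m a1 a2) ` {..<4 * m\<^sup>2} = UNIV"
proof -
  note m = assms(1) and a = assms(2,3)
  have dA: "(A m a1 a2 has_real_derivative A' m a1 a2 \<gamma>) (at \<gamma>)"
    and dA': "(A' m a1 a2 has_real_derivative A'' m a1 a2 \<gamma>) (at \<gamma>)"
    and ddA: "(deriv (A m a1 a2) has_real_derivative A'' m a1 a2 \<gamma>) (at \<gamma>)"
    and pos: "0 < A'' m a1 a2 \<gamma>" if "\<gamma> \<in> {..<4 * m\<^sup>2}" for \<gamma>
    using that has_real_derivative_A[OF m] has_real_derivative_A'[OF m]
      has_real_derivative_deriv_A[OF m] A''_pos[OF m _ a] by simp_all
  have lim_bot: "filterlim (deriv (A m a1 a2)) at_bot at_bot"
    using filterlim_A'_at_bot[OF m a(1)] filterlim_deriv_A_iff[OF m eventually_gt_at_bot] by simp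
  have lim_left: "filterlim (deriv (A m a1 a2)) at_top (at_left (4 * m\<^sup>2))"
    using filterlim_A'_at_left_threshold[OF m a] filterlim_deriv_A_iff[OF m] by (simp add: eventually_at_filter)
  have "convex_on {..<4 * m\<^sup>2} (A m a1 a2)"
    by (rule f''_ge0_imp_convex[OF _ dA dA']) (use pos in \<open>auto simp: less_imp_le\<close>)
  moreover have "mono_on {..<4 * m\<^sup>2} (deriv (A m a1 a2))"
    by (rule mono_on_of_DERIV_nonneg[OF _ ddA]) (use pos in \<open>auto simp: less_imp_le\<close>)
  moreover have "deriv (A m a1 a2) ` {..<4 * m\<^sup>2} = UNIV"
    by (rule image_lessThan_eq_UNIV_of_filterlim[OF has_real_derivative_imp_continuous_on[OF ddA] lim_bot lim_left])
  ultimately show ?thesis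
    using dA ddA pos lim_bot lim_left unfolding A''_def real_differentiable_def by blast
qed

end
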